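(* Let $n\ge 2$ be an integer and $A\subseteq L_n$. If the subset $L_n$ is $z$-embedded in $(X_n,\tau(A))$, then $L_n\setminus A$ does not contain a closed uncountable subset of $(L_n,\tau_E|_{L_n})$.
   Context: For $\overline{x},\overline{a}\in\mathbb R^n$ let $|\overline{x}-\overline{a}|$ be the Euclidean distance and $B(\overline{a},\epsilon)=\{\overline{x}\in\mathbb R^n:|\overline{x}-\overline{a}|<\epsilon\}$. Let $P_n=\{\overline{x}\in\mathbb R^n: x_n>0\}$, $L_n=\{\overline{x}\in\mathbb R^n: x_n=0\}$, $X_n=P_n\cup L_n$, and let $\tau_E$ denote the Euclidean topology on $X_n$. For $\overline{a}\in L_n$ and $\epsilon>0$ put $\overline{a(\epsilon)}=(a_1,\dots,a_{n-1},\epsilon)$ and $\tilde B(\overline{a},\epsilon)=\{\overline{a}\}\cup B(\overline{a(\epsilon)},\epsilon)$. For $A\subseteq L_n$, the topology $\tau(A)$ on $X_n$ is generated by the local bases: at $\overline{a}\in P_n$, the sets $B(\overline{a},\epsilon)$ with $0<\epsilon<a_n$; at $\overline{a}\in A$, the sets $B(\overline{a},\epsilon)\cap X_n$ with $\epsilon>0$; at $\overline{a}\in L_n\setminus A$, the sets $\tilde B(\overline{a},\epsilon)$ with $\epsilon>0$. A subset $Y$ of a space $X$ is $z$-embedded in $X$ if every zero set of $Y$ is the trace on $Y$ of some zero set of $X$. *)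

theory Defs
  imports "HOL-Analysis.Analysis"
begin

text \<open>Points of R^n are modelled as pairs (y, t) with y in R^(n-1) (type real^'m)
  and t = x_n the last coordinate; n = CARD('m) + 1 >= 2. The product metric on
  (real^'m) \<times> real is the Euclidean one.\<close>

type_synonym 'm pt = "(real^'m) \<times> real"

definition Pn :: "'m::finite pt set" where "Pn = {x. snd x > 0}"
definition Ln :: "'m::finite pt set" where "Ln = {x. snd x = 0}"
definition Xn :: "'m::finite pt set" where "Xn = Pn \<union> Ln"

definition lift :: "'m::finite pt \<Rightarrow> real \<Rightarrow> 'm pt" where
  "lift a e = (fst a, e)"
definition tball :: "'m::finite pt \<Rightarrow> real \<Rightarrow> 'm pt set" where
  "tball a e = {a} \<union> ball (lift a e) e"

definition basic_nbhd :: "'m::finite pt set \<Rightarrow> 'm pt \<Rightarrow> 'm pt set \<Rightarrow> bool" where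
  "basic_nbhd A a U \<longleftrightarrow>
     (a \<in> Pn \<and> (\<exists>e. 0 < e \<and> e < snd a \<and> U = ball a e)) \<or>
     (a \<in> A \<and> (\<exists>e>0. U = ball a e \<inter> Xn)) \<or>
     (a \<in> Ln - A \<and> (\<exists>e>0. U = tball a e))"

definition tauA :: "'m::finite pt set \<Rightarrow> 'm pt topology" where
  "tauA A = topology (\<lambda>U. U \<subseteq> Xn \<and> (\<forall>a\<in>U. \<exists>V. basic_nbhd A a V \<and> V \<subseteq> U))"

definition zero_set :: "'a topology \<Rightarrow> 'a set \<Rightarrow> bool" where
  "zero_set X Z \<longleftrightarrow> (\<exists>f. continuous_map X euclideanreal f \<and> Z = {x \<in> topspace X. f x = 0})"

definition z_embedded :: "'a set \<Rightarrow> 'a topology \<Rightarrow> bool" where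
  "z_embedded Y X \<longleftrightarrow>
     (\<forall>Z. zero_set (subtopology X Y) Z \<longrightarrow> (\<exists>Z'. zero_set X Z' \<and> Z = Z' \<inter> Y))"

end

theory Submission
  imports Defs
begin

text \<open>Suppose \<open>C \<subseteq> L\<^sub>n - A\<close> is closed and uncountable. Its condensation points
  in \<open>C\<close> form a nonempty perfect set \<open>K\<close>; let \<open>D\<close> be a countable dense subset of \<open>K\<close>.
  A tangent disc at a point of \<open>L\<^sub>n - A\<close> meets \<open>L\<^sub>n\<close> only in that point, so \<open>D\<close> is
  clopen in \<open>L\<^sub>n\<close>, hence a zero set there, and by \<open>z\<close>-embedding \<open>D = Z(g) \<inter> L\<^sub>n\<close> for a
  continuous \<open>g\<close> on \<open>X\<^sub>n\<close>. Continuity of \<open>g\<close> at \<open>L\<^sub>n - A\<close> is continuity along tangent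
  discs, so every point of \<open>K - D\<close> has a tangent disc of radius \<open>1/(k+1)\<close> on which
  \<open>|g| \<ge> 1/(k+1)\<close>. Tangent discs at nearby points of \<open>L\<^sub>n\<close> intersect, so the closure of
  the set of such points misses the zeros \<open>D\<close>. Hence \<open>D\<close> is a \<open>G\<^sub>\<delta>\<close> in \<open>K\<close>, which Baire's
  theorem forbids for a countable dense subset of a perfect complete space.\<close>

section \<open>Condensation points and Baire category\<close>

definition condensation_points :: "'a::metric_space set \<Rightarrow> 'a set" where
  "condensation_points C = {x. \<forall>e>0. uncountable (C \<inter> ball x e)}"

lemma countable_Diff_condensation_points:
  fixes C :: "'a::{metric_space,second_countable_topology} set"
  shows "countable (C - condensation_points C)"
proof -
  define \<F> where "\<F> = {ball x e |x e. countable (C \<inter> ball x e)}"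
  obtain \<F>' where \<F>': "\<F>' \<subseteq> \<F>" "countable \<F>'" "\<Union>\<F>' = \<Union>\<F>"
    using Lindelof[of \<F>] by (auto simp: \<F>_def)
  have "C - condensation_points C \<subseteq> (\<Union>U\<in>\<F>'. C \<inter> U)"
    using \<F>'(3) by (force simp: condensation_points_def \<F>_def)
  moreover have "countable (\<Union>U\<in>\<F>'. C \<inter> U)"
    using \<F>' by (intro countable_UN) (auto simp: \<F>_def)
  ultimately show ?thesis
    by (rule countable_subset)
qed

lemma closed_condensation_points: "closed (condensation_points C)"
  unfolding closed_limpt
proof (intro allI impI)
  fix x assume "x islimpt condensation_points C"
  show "x \<in> condensation_points C"
    unfolding condensation_points_def
  proof (intro CollectI allI impI)
    fix e :: real assume "e > 0"
    then obtain y where y: "y \<in> condensation_points C" "dist y x < e / 2"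
      using \<open>x islimpt _\<close> by (meson half_gt_zero islimpt_approachable)
    then have "uncountable (C \<inter> ball y (e / 2))"
      using \<open>e > 0\<close> by (simp add: condensation_points_def)
    moreover have "ball y (e / 2) \<subseteq> ball x e"
      using y(2) by metric
    ultimately show "uncountable (C \<inter> ball x e)"
      by (meson Int_mono countable_subset order_refl)
  qed
qed

lemma condensation_point_islimpt:
  fixes C :: "'a::{metric_space,second_countable_topology} set"
  assumes "x \<in> condensation_points C"
  shows "x islimpt (C \<inter> condensation_points C)"
  unfolding islimpt_approachable
proof (intro allI impI)
  fix e :: real assume "e > 0"
  have "C \<inter> ball x e \<subseteq> (C \<inter> condensation_points C \<inter> ball x e - {x}) \<union> {x} \<union> (C - condensation_points C)"
    by blast
  moreover have "uncountable (C \<inter> ball x e)"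
    using assms \<open>e > 0\<close> by (simp add: condensation_points_def)
  ultimately have "uncountable (C \<inter> condensation_points C \<inter> ball x e - {x})"
    using countable_Diff_condensation_points[of C] by (metis countable_Un countable_finite countable_subset finite.intros)
  then obtain y where "y \<in> C \<inter> condensation_points C \<inter> ball x e" "y \<noteq> x"
    by (metis DiffE countable_empty equals0I singletonI)
  then show "\<exists>y\<in>C \<inter> condensation_points C. y \<noteq> x \<and> dist y x < e"
    by (auto simp: dist_commute)
qed

lemma closed_uncountable_contains_perfect:
  fixes C :: "'a::{metric_space,second_countable_topology} set"
  assumes "closed C" "uncountable C"
  obtains K where "K \<subseteq> C" "closed K" "K \<noteq> {}" "\<And>x. x \<in> K \<Longrightarrow> x islimpt K"
proof
  let ?K = "C \<inter> condensation_points C"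
  show "closed ?K"
    using assms(1) closed_condensation_points by blast
  have "uncountable ?K"
    using assms(2) countable_Diff_condensation_points[of C] countable_Un[of "C - condensation_points C" ?K]
    by (metis Un_Diff_Int)
  then show "?K \<noteq> {}"
    by auto
  show "x islimpt ?K" if "x \<in> ?K" for x
    using that condensation_point_islimpt by blast
qed auto

lemma countable_dense_subset:
  fixes K :: "'a::{metric_space,second_countable_topology} set"
  obtains D where "countable D" "D \<subseteq> K" "K \<subseteq> closure D"
proof -
  obtain \<B> :: "'a set set" where \<B>: "countable \<B>" "topological_basis \<B>"
    using ex_countable_basis by blast
  define pick where "pick B = (SOME x. x \<in> B \<inter> K)" for B
  have pick: "pick B \<in> B \<inter> K" if "x \<in> B" "x \<in> K" for B x
    unfolding pick_def by (rule someI[of _ x]) (use that in simp)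
  define D where "D = pick ` {B \<in> \<B>. B \<inter> K \<noteq> {}}"
  have "countable D"
    unfolding D_def using \<B>(1) by simp
  moreover have "D \<subseteq> K"
    unfolding D_def using pick by blast
  moreover have "K \<subseteq> closure D"
  proof
    fix x assume "x \<in> K"
    show "x \<in> closure D"
      unfolding closure_approachable
    proof (intro allI impI)
      fix e :: real assume "0 < e"
      then obtain B where B: "B \<in> \<B>" "x \<in> B" "B \<subseteq> ball x e"
        by (metis \<B>(2) centre_in_ball open_ball topological_basisE)
      then have "pick B \<in> D" "pick B \<in> ball x e"
        using pick[of x B] \<open>x \<in> K\<close> unfolding D_def by blast+
      then show "\<exists>y\<in>D. dist y x < e"
        by (auto simp: dist_commute)
    qed
  qed
  ultimately show ?thesis
    using that by blast
qed

lemma countable_dense_not_Gdelta: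
  fixes K :: "'a::{real_normed_vector,heine_borel} set"
  assumes K: "closed K" "K \<noteq> {}" "\<And>x. x \<in> K \<Longrightarrow> x islimpt K"
    and D: "countable D" "D \<subseteq> K" "K \<subseteq> closure D"
    and F: "\<And>k::nat. closed (F k)" "\<And>k. D \<inter> F k = {}"
  shows "\<not> K - D \<subseteq> (\<Union>k. F k)"
proof
  assume cover: "K - D \<subseteq> (\<Union>k. F k)"
  define \<G> where "\<G> = range (\<lambda>k. K - F k) \<union> (\<lambda>d. K - {d}) ` D"
  have "countable \<G>"
    unfolding \<G>_def using D(1) by simp
  moreover have "openin (top_of_set K) T \<and> K \<subseteq> closure T" if T: "T \<in> \<G>" for T
  proof -
    consider k where "T = K - F k" | d where "d \<in> D" "T = K - {d}"
      using T unfolding \<G>_def by blast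
    then show ?thesis
    proof cases
      case 1
      then have "openin (top_of_set K) T"
        using F(1) by (metis Diff_eq open_Compl openin_open_Int)
      moreover have "D \<subseteq> T"
        using 1 D(2) F(2) by blast
      ultimately show ?thesis
        using D(3) closure_mono by blast
    next
      case 2
      then have "openin (top_of_set K) T"
        by (metis Diff_eq closed_singleton open_Compl openin_open_Int)
      moreover have "d islimpt T"
        using 2 D(2) K(3) islimpt_punctured by blast
      ultimately show ?thesis
        using 2 unfolding closure_def by blast
    qed
  qed
  ultimately have "K \<subseteq> closure (\<Inter>\<G>)"
    by (rule Baire[OF K(1)])
  then obtain z where z: "z \<in> \<Inter>\<G>"
    using K(2) by (metis closure_empty ex_in_conv subset_empty)
  then have "z \<in> K - D"
    unfolding \<G>_def by blast
  moreover have "z \<notin> F k" for k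
    using z unfolding \<G>_def by blast
  ultimately show False
    using cover by blast
qed

section \<open>Tangent discs\<close>

lemma mem_tball_iff:
  assumes "0 < e"
  shows "z \<in> tball a e \<longleftrightarrow> z = a \<or> (dist (fst a) (fst z))\<^sup>2 + (snd z)\<^sup>2 < 2 * e * snd z"
proof -
  have "dist (lift a e) z = sqrt ((dist (fst a) (fst z))\<^sup>2 + (e - snd z)\<^sup>2)"
    by (simp add: lift_def dist_prod_def dist_real_def)
  also have "\<dots> < e \<longleftrightarrow> (dist (fst a) (fst z))\<^sup>2 + (e - snd z)\<^sup>2 < e\<^sup>2"
    using assms real_sqrt_less_iff[of _ "e\<^sup>2"] by simp
  also have "\<dots> \<longleftrightarrow> (dist (fst a) (fst z))\<^sup>2 + (snd z)\<^sup>2 < 2 * e * snd z"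
    by (simp add: power2_eq_square algebra_simps)
  finally show ?thesis
    by (auto simp: tball_def dist_commute)
qed

lemma tball_subset_Pn:
  assumes "0 < e"
  shows "tball a e \<subseteq> insert a Pn"
proof
  fix z assume z: "z \<in> tball a e"
  have "0 < snd z" if "(dist (fst a) (fst z))\<^sup>2 + (snd z)\<^sup>2 < 2 * e * snd z"
  proof (rule ccontr)
    assume "\<not> 0 < snd z"
    then have "2 * e * snd z \<le> 0"
      using assms by (simp add: mult_nonneg_nonpos)
    moreover have "0 \<le> (dist (fst a) (fst z))\<^sup>2 + (snd z)\<^sup>2"
      by simp
    ultimately show False
      using that by linarith
  qed
  then show "z \<in> insert a Pn"
    using z assms by (auto simp: mem_tball_iff Pn_def)
qed

lemma tball_mono:
  assumes "0 < e" "e \<le> e'"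
  shows "tball a e \<subseteq> tball a e'"
proof
  fix z assume z: "z \<in> tball a e"
  show "z \<in> tball a e'"
  proof (cases "z = a")
    case False
    then have "0 < snd z"
      using z tball_subset_Pn[OF assms(1), of a] unfolding Pn_def by blast
    then have "2 * e * snd z \<le> 2 * e' * snd z"
      using assms by simp
    then show ?thesis
      using z False assms by (auto simp: mem_tball_iff)
  qed (simp add: tball_def)
qed

lemma lift_min_mem_tball_Int:
  assumes "0 < e" "0 < e'" "dist x d < min e e'"
  shows "lift x (min e e') \<in> tball x e \<inter> tball d e'"
proof -
  define m where "m = min e e'"
  have m: "0 < m" "m \<le> e" "m \<le> e'"
    using assms by (auto simp: m_def)
  have "dist (fst d) (fst x) < m"
    using dist_fst_le[of x d] assms(3) by (simp add: m_def dist_commute)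
  then have "(dist (fst d) (fst x))\<^sup>2 < m\<^sup>2"
    by (simp add: power_strict_mono)
  moreover have "m\<^sup>2 \<le> e' * m" "m\<^sup>2 \<le> e * m" "0 < e * m"
    using m by (simp_all add: power2_eq_square mult_right_mono)
  ultimately have "(dist (fst x) (fst x))\<^sup>2 + m\<^sup>2 < 2 * e * m"
    and "(dist (fst d) (fst x))\<^sup>2 + m\<^sup>2 < 2 * e' * m"
    by simp_all
  then have "lift x m \<in> tball x e \<inter> tball d e'"
    using assms(1,2) by (simp add: mem_tball_iff lift_def)
  then show ?thesis
    by (simp add: m_def)
qed

lemma Pn_Int_Ln: "Pn \<inter> Ln = {}"
  by (auto simp: Pn_def Ln_def)

lemma closed_Ln: "closed Ln"
  unfolding Ln_def by (intro closed_Collect_eq continuous_intros)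

lemma ball_subset_Pn:
  assumes "e \<le> snd a"
  shows "ball a e \<subseteq> Pn"
proof
  fix z assume "z \<in> ball a e"
  then have "\<bar>snd a - snd z\<bar> < e"
    using dist_snd_le[of a z] by (simp add: dist_real_def)
  then show "z \<in> Pn"
    using assms by (simp add: Pn_def)
qed

section \<open>The topology \<open>\<tau>(A)\<close>\<close>

lemma basic_nbhd_nested:
  assumes "A \<subseteq> Ln" "basic_nbhd A a U" "basic_nbhd A a V"
  shows "U \<subseteq> V \<or> V \<subseteq> U"
proof -
  have disj: "a \<notin> Pn \<or> a \<notin> Ln"
    using Pn_Int_Ln by blast
  consider (P) "a \<in> Pn" | (A) "a \<in> A" | (L) "a \<in> Ln - A"
    using assms(2) unfolding basic_nbhd_def by blast
  then show ?thesis
  proof cases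
    case P
    then obtain e e' where "U = ball a e" "V = ball a e'"
      using assms disj unfolding basic_nbhd_def by blast
    then show ?thesis
      by (metis le_cases subset_ball)
  next
    case A
    then obtain e e' where "U = ball a e \<inter> Xn" "V = ball a e' \<inter> Xn"
      using assms disj unfolding basic_nbhd_def by blast
    then show ?thesis
      by (metis le_cases subset_ball Int_mono order_refl)
  next
    case L
    then obtain e e' where "0 < e" "0 < e'" "U = tball a e" "V = tball a e'"
      using assms disj unfolding basic_nbhd_def by blast
    then show ?thesis
      by (metis le_cases tball_mono)
  qed
qed

lemma istopology_tauA:
  assumes "A \<subseteq> Ln"
  shows "istopology (\<lambda>U. U \<subseteq> Xn \<and> (\<forall>a\<in>U. \<exists>V. basic_nbhd A a V \<and> V \<subseteq> U))"
  unfolding istopology_def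
proof (rule conjI; intro allI impI)
  fix S T :: "'a pt set"
  assume S: "S \<subseteq> Xn \<and> (\<forall>a\<in>S. \<exists>V. basic_nbhd A a V \<and> V \<subseteq> S)"
    and T: "T \<subseteq> Xn \<and> (\<forall>a\<in>T. \<exists>V. basic_nbhd A a V \<and> V \<subseteq> T)"
  show "S \<inter> T \<subseteq> Xn \<and> (\<forall>a\<in>S \<inter> T. \<exists>V. basic_nbhd A a V \<and> V \<subseteq> S \<inter> T)"
  proof (intro conjI ballI)
    show "S \<inter> T \<subseteq> Xn"
      using S by blast
    fix a assume "a \<in> S \<inter> T"
    then obtain U V where U: "basic_nbhd A a U" "U \<subseteq> S" and V: "basic_nbhd A a V" "V \<subseteq> T"
      using S T by blast
    then have "U \<subseteq> V \<or> V \<subseteq> U"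
      using basic_nbhd_nested[OF assms] by blast
    then show "\<exists>W. basic_nbhd A a W \<and> W \<subseteq> S \<inter> T"
      using U V by blast
  qed
next
  fix K :: "'a pt set set"
  assume "\<forall>S\<in>K. S \<subseteq> Xn \<and> (\<forall>a\<in>S. \<exists>V. basic_nbhd A a V \<and> V \<subseteq> S)"
  then show "\<Union>K \<subseteq> Xn \<and> (\<forall>a\<in>\<Union>K. \<exists>V. basic_nbhd A a V \<and> V \<subseteq> \<Union>K)"
    by (meson Sup_upper Union_least UnionE order_trans)
qed

lemma openin_tauA:
  assumes "A \<subseteq> Ln"
  shows "openin (tauA A) U \<longleftrightarrow> U \<subseteq> Xn \<and> (\<forall>a\<in>U. \<exists>V. basic_nbhd A a V \<and> V \<subseteq> U)"
  unfolding tauA_def using istopology_tauA[OF assms] by simp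

lemma basic_nbhd_PnI: "a \<in> Pn \<Longrightarrow> 0 < e \<Longrightarrow> e < snd a \<Longrightarrow> basic_nbhd A a (ball a e)"
  and basic_nbhd_ballI: "a \<in> A \<Longrightarrow> 0 < e \<Longrightarrow> basic_nbhd A a (ball a e \<inter> Xn)"
  and basic_nbhd_tballI: "a \<in> Ln - A \<Longrightarrow> 0 < e \<Longrightarrow> basic_nbhd A a (tball a e)"
  unfolding basic_nbhd_def by blast+

lemma ex_basic_nbhd_subset_Pn:
  assumes "a \<in> Pn"
  shows "\<exists>V. basic_nbhd A a V \<and> V \<subseteq> Pn"
proof -
  have "0 < snd a"
    using assms by (simp add: Pn_def)
  then show ?thesis
    using assms basic_nbhd_PnI[of a "snd a / 2"] ball_subset_Pn[of "snd a / 2" a] by auto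
qed

lemma ex_basic_nbhd_subset_insert_Pn:
  assumes "a \<in> Ln - A"
  shows "\<exists>V. basic_nbhd A a V \<and> V \<subseteq> insert a Pn"
  using assms basic_nbhd_tballI[of a A 1] tball_subset_Pn[of 1 a] by auto

lemma topspace_tauA:
  fixes A :: "'m::finite pt set"
  assumes "A \<subseteq> Ln"
  shows "topspace (tauA A) = Xn"
proof -
  have "openin (tauA A) Xn"
    unfolding openin_tauA[OF assms]
  proof (intro conjI ballI)
    fix a :: "'m pt" assume "a \<in> Xn"
    then consider "a \<in> Pn" | "a \<in> A" | "a \<in> Ln - A"
      by (auto simp: Xn_def)
    then show "\<exists>V. basic_nbhd A a V \<and> V \<subseteq> Xn"
    proof cases
      case 1
      then show ?thesis
        using ex_basic_nbhd_subset_Pn[of a A] unfolding Xn_def by blast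
    next
      case 2
      then show ?thesis
        by (intro exI[of _ "ball a 1 \<inter> Xn"]) (simp add: basic_nbhd_ballI)
    next
      case 3
      then show ?thesis
        using ex_basic_nbhd_subset_insert_Pn[of a A] unfolding Xn_def by blast
    qed
  qed simp
  then show ?thesis
    by (metis openin_subset openin_tauA[OF assms] openin_topspace subset_antisym)
qed

lemma continuous_map_tauA_at_tball:
  assumes "A \<subseteq> Ln" "continuous_map (tauA A) euclideanreal g" "x \<in> Ln - A" "0 < \<epsilon>"
  obtains e where "0 < e" "\<And>y. y \<in> tball x e \<Longrightarrow> \<bar>g y - g x\<bar> < \<epsilon>"
proof -
  have "openin (tauA A) {y \<in> Xn. g y \<in> ball (g x) \<epsilon>}"
    using openin_continuous_map_preimage[OF assms(2), of "ball (g x) \<epsilon>"] topspace_tauA[OF assms(1)]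
    by simp
  moreover have "x \<in> {y \<in> Xn. g y \<in> ball (g x) \<epsilon>}"
    using assms(3,4) by (simp add: Xn_def)
  ultimately obtain V where "basic_nbhd A x V" "V \<subseteq> {y \<in> Xn. g y \<in> ball (g x) \<epsilon>}"
    unfolding openin_tauA[OF assms(1)] by blast
  moreover have "x \<notin> Pn"
    using assms(3) Pn_Int_Ln by blast
  ultimately obtain e where "0 < e" "tball x e \<subseteq> {y. \<bar>g y - g x\<bar> < \<epsilon>}"
    using assms(3) by (fastforce simp: basic_nbhd_def dist_real_def)
  then show ?thesis
    using that by blast
qed

section \<open>Zero sets of \<open>L\<^sub>n\<close>\<close>

lemma zero_set_clopen:
  assumes "openin X S" "closedin X S"
  shows "zero_set X S"
proof -
  let ?f = "\<lambda>x. if x \<in> S then 0 else 1 :: real"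
  have "continuous_map X euclideanreal ?f"
    by (rule continuous_map_cases) (use assms in \<open>auto simp: frontier_of_def closure_of_closedin interior_of_openin\<close>)
  moreover have "S = {x \<in> topspace X. ?f x = 0}"
    using closedin_subset[OF assms(2)] by auto
  ultimately show ?thesis
    unfolding zero_set_def by blast
qed

lemma openin_tauA_Un_Pn:
  assumes "A \<subseteq> Ln" "D \<subseteq> Ln - A"
  shows "openin (tauA A) (D \<union> Pn)"
  unfolding openin_tauA[OF assms(1)]
proof (intro conjI ballI)
  show "D \<union> Pn \<subseteq> Xn"
    using assms(2) by (auto simp: Xn_def)
  fix a assume "a \<in> D \<union> Pn"
  then show "\<exists>V. basic_nbhd A a V \<and> V \<subseteq> D \<union> Pn"
    using assms(2) ex_basic_nbhd_subset_Pn[of a A] ex_basic_nbhd_subset_insert_Pn[of a A] by blast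
qed

lemma openin_tauA_Diff:
  assumes "A \<subseteq> Ln" "D \<subseteq> Ln" "closure D \<inter> A = {}"
  shows "openin (tauA A) (Xn - D)"
  unfolding openin_tauA[OF assms(1)]
proof (intro conjI ballI)
  fix a assume a: "a \<in> Xn - D"
  then consider "a \<in> Pn" | "a \<in> A" | "a \<in> Ln - A"
    by (auto simp: Xn_def)
  then show "\<exists>V. basic_nbhd A a V \<and> V \<subseteq> Xn - D"
  proof cases
    case 1
    then show ?thesis
      using ex_basic_nbhd_subset_Pn[of a A] assms(2) Pn_Int_Ln unfolding Xn_def by blast
  next
    case 2
    then obtain e where "0 < e" "ball a e \<subseteq> - closure D"
      using assms(3) open_contains_ball by blast
    moreover have "D \<subseteq> closure D"
      by (rule closure_subset)
    ultimately have "ball a e \<inter> Xn \<subseteq> Xn - D"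
      by blast
    then show ?thesis
      using 2 \<open>0 < e\<close> basic_nbhd_ballI by blast
  next
    case 3
    then show ?thesis
      using a ex_basic_nbhd_subset_insert_Pn[of a A] assms(2) Pn_Int_Ln unfolding Xn_def by blast
  qed
qed blast

lemma zero_set_Ln_tauA:
  assumes "A \<subseteq> Ln" "D \<subseteq> Ln - A" "closure D \<inter> A = {}"
  shows "zero_set (subtopology (tauA A) Ln) D"
proof (rule zero_set_clopen)
  have "openin (subtopology (tauA A) Ln) ((D \<union> Pn) \<inter> Ln)"
    using assms(1,2) by (intro openin_subtopology_Int openin_tauA_Un_Pn)
  moreover have "openin (subtopology (tauA A) Ln) ((Xn - D) \<inter> Ln)"
    using assms by (intro openin_subtopology_Int openin_tauA_Diff) auto
  moreover have "(D \<union> Pn) \<inter> Ln = D" "(Xn - D) \<inter> Ln = Ln - D"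
    using assms(2) Pn_Int_Ln by (auto simp: Xn_def)
  moreover have "topspace (subtopology (tauA A) Ln) = Ln"
    using topspace_tauA[OF assms(1)] by (auto simp: Xn_def)
  ultimately show "openin (subtopology (tauA A) Ln) D" "closedin (subtopology (tauA A) Ln) D"
    using assms(2) by (auto simp: closedin_def)
qed

definition away_from_zero :: "('m::finite pt \<Rightarrow> real) \<Rightarrow> real \<Rightarrow> 'm pt set" where
  "away_from_zero g e = {x \<in> Ln. \<forall>y\<in>tball x e. e \<le> \<bar>g y\<bar>}"

lemma nonzero_mem_away_from_zero:
  assumes "A \<subseteq> Ln" "continuous_map (tauA A) euclideanreal g" "x \<in> Ln - A" "g x \<noteq> 0"
  obtains k :: nat where "x \<in> away_from_zero g (inverse (Suc k))"
proof -
  obtain e where e: "0 < e" "\<And>y. y \<in> tball x e \<Longrightarrow> \<bar>g y - g x\<bar> < \<bar>g x\<bar> / 2"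
    using continuous_map_tauA_at_tball[OF assms(1-3), of "\<bar>g x\<bar> / 2"] assms(4) by auto
  obtain k :: nat where k: "inverse (Suc k) < min e (\<bar>g x\<bar> / 2)"
    using reals_Archimedean e(1) assms(4) by (metis min_less_iff_conj zero_less_divide_iff zero_less_numeral zero_less_abs_iff)
  have "inverse (Suc k) \<le> \<bar>g y\<bar>" if "y \<in> tball x (inverse (Suc k))" for y
  proof -
    have "y \<in> tball x e"
      using that tball_mono[of "inverse (Suc k)" e x] k by auto
    then have "\<bar>g y - g x\<bar> < \<bar>g x\<bar> / 2"
      by (rule e(2))
    then show ?thesis
      using k by linarith
  qed
  then show ?thesis
    using that assms(3) unfolding away_from_zero_def by blast
qed

lemma zero_not_in_closure_away_from_zero:
  assumes "A \<subseteq> Ln" "continuous_map (tauA A) euclideanreal g" "d \<in> Ln - A" "g d = 0" "0 < \<epsilon>"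
  shows "d \<notin> closure (away_from_zero g \<epsilon>)"
proof
  assume "d \<in> closure (away_from_zero g \<epsilon>)"
  obtain \<delta> where \<delta>: "0 < \<delta>" "\<And>y. y \<in> tball d \<delta> \<Longrightarrow> \<bar>g y\<bar> < \<epsilon>"
    using continuous_map_tauA_at_tball[OF assms(1-3,5)] assms(4) by auto
  obtain x where x: "x \<in> away_from_zero g \<epsilon>" "dist x d < min \<epsilon> \<delta>"
    using \<open>d \<in> closure _\<close> \<delta>(1) assms(5) closure_approachable by (metis min_less_iff_conj)
  then have "lift x (min \<epsilon> \<delta>) \<in> tball x \<epsilon> \<inter> tball d \<delta>"
    using assms(5) \<delta>(1) by (intro lift_min_mem_tball_Int)
  then have "\<epsilon> \<le> \<bar>g (lift x (min \<epsilon> \<delta>))\<bar>" "\<bar>g (lift x (min \<epsilon> \<delta>))\<bar> < \<epsilon>"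
    using x(1) \<delta>(2) unfolding away_from_zero_def by blast+
  then show False
    by linarith
qed

lemma z_embedded_Ln_zero_trace:
  assumes "A \<subseteq> Ln" "z_embedded Ln (tauA A)" "D \<subseteq> Ln - A" "closure D \<inter> A = {}"
  obtains g where "continuous_map (tauA A) euclideanreal g" "\<And>x. x \<in> Ln \<Longrightarrow> x \<in> D \<longleftrightarrow> g x = 0"
proof -
  have "zero_set (subtopology (tauA A) Ln) D"
    using assms(1,3,4) by (rule zero_set_Ln_tauA)
  then obtain Z where "zero_set (tauA A) Z" "D = Z \<inter> Ln"
    using assms(2) unfolding z_embedded_def by blast
  then show ?thesis
    using that unfolding zero_set_def topspace_tauA[OF assms(1)] Xn_def by blast
qed

lemma zero_trace_complement_Fsigma:
  assumes "A \<subseteq> Ln" "continuous_map (tauA A) euclideanreal g"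
    and "D \<subseteq> Ln - A" "\<And>x. x \<in> Ln \<Longrightarrow> x \<in> D \<longleftrightarrow> g x = 0"
  obtains F :: "nat \<Rightarrow> 'm::finite pt set"
  where "\<And>k. closed (F k)" "\<And>k. D \<inter> F k = {}" "Ln - A - D \<subseteq> (\<Union>k. F k)"
proof
  let ?F = "\<lambda>k::nat. closure (away_from_zero g (inverse (Suc k)))"
  show "closed (?F k)" for k
    by simp
  show "D \<inter> ?F k = {}" for k
  proof -
    have "d \<notin> ?F k" if "d \<in> D" for d
    proof -
      have "d \<in> Ln - A" "g d = 0"
        using that assms(3,4) by blast+
      then show ?thesis
        by (simp add: zero_not_in_closure_away_from_zero[OF assms(1,2)])
    qed
    then show ?thesis
      by blast
  qed
  show "Ln - A - D \<subseteq> (\<Union>k. ?F k)"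
  proof
    fix x assume "x \<in> Ln - A - D"
    then obtain k where "x \<in> away_from_zero g (inverse (Suc k))"
      using nonzero_mem_away_from_zero[OF assms(1,2)] assms(4) by blast
    then show "x \<in> (\<Union>k. ?F k)"
      using closure_subset by blast
  qed
qed

theorem mainTheorem20:
  fixes A :: "('m::finite) pt set"
  assumes "A \<subseteq> Ln"
    and "z_embedded Ln (tauA A)"
  shows "\<not> (\<exists>C. C \<subseteq> Ln - A \<and> closedin (subtopology euclidean Ln) C \<and> uncountable C)"
proof
  assume "\<exists>C. C \<subseteq> Ln - A \<and> closedin (subtopology euclidean Ln) C \<and> uncountable C"
  then obtain C where C: "C \<subseteq> Ln - A" "closed C" "uncountable C"
    using closed_Ln closedin_closed_trans by blast
  obtain K where K: "K \<subseteq> C" "closed K" "K \<noteq> {}" "\<And>x. x \<in> K \<Longrightarrow> x islimpt K"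
    using closed_uncountable_contains_perfect[OF C(2,3)] by blast
  obtain D where D: "countable D" "D \<subseteq> K" "K \<subseteq> closure D"
    using countable_dense_subset by blast
  have "D \<subseteq> Ln - A" "closure D \<inter> A = {}"
    using D(2) K(1,2) C(1) closure_minimal by blast+
  then obtain g where g: "continuous_map (tauA A) euclideanreal g" "\<And>x. x \<in> Ln \<Longrightarrow> x \<in> D \<longleftrightarrow> g x = 0"
    using z_embedded_Ln_zero_trace[OF assms] by blast
  obtain F :: "nat \<Rightarrow> 'm pt set" where "\<And>k. closed (F k)" "\<And>k. D \<inter> F k = {}" "Ln - A - D \<subseteq> (\<Union>k. F k)"
    using zero_trace_complement_Fsigma[OF assms(1) g(1) \<open>D \<subseteq> Ln - A\<close> g(2)] by blast
  moreover have "K - D \<subseteq> Ln - A - D"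
    using K(1) C(1) by blast
  ultimately show False
    using countable_dense_not_Gdelta[OF K(2-4) D, of F] by blast
qed

end
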